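(* Let $q=p^f$ be a prime power and $N>2$ an integer with $N\mid(q-1)$. Let $\gamma$ be a primitive element of $\mathbb{F}_q$, $C_0=\langle\gamma^N\rangle$, and let $\eta_a=\sum_{x\in\gamma^aC_0}\psi(x)$, $0\le a\le N-1$. Assume the $\eta_a$ take exactly three rational values $\alpha_1,\alpha_2,\alpha_3$ in arithmetic progression, with $\alpha_1-\alpha_2=-t<0$ and $\alpha_3-\alpha_2=t>0$. Let $Z_N=\mathbb{F}_q^*/C_0$ with generator $\bar\gamma=\gamma C_0$, and $I_i=\{\bar\gamma^a\in Z_N:\eta_a=\alpha_i\}$, $i=1,2,3$. Then $I_1-I_3$ generates a circulant weighing matrix $\mathbf{CW}(N,q/t^2)$ if and only if $q$ is a square and $\alpha_2=(\sqrt q-1)/N$.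
   Context: $\psi$ is the canonical additive character of $\mathbb{F}_q$: $\psi(x)=\xi_p^{\mathrm{Tr}_{q/p}(x)}$. A circulant weighing matrix $\mathbf{CW}(N,w)$ is an $N\times N$ circulant matrix $M$ with entries in $\{-1,0,1\}$ satisfying $MM^\top=wI$. The element $I_1-I_3$ of the group ring $\mathbb{Z}[Z_N]$ (subsets identified with the sums of their elements) generates the circulant matrix with first row $(a_0,\dots,a_{N-1})$, where $a_i=1$ if $\bar\gamma^i\in I_1$, $a_i=-1$ if $\bar\gamma^i\in I_3$, and $a_i=0$ otherwise; it generates a $\mathbf{CW}(N,w)$ exactly when $(I_1-I_3)(I_1-I_3)^{(-1)}=w\cdot 1$ in $\mathbb{Z}[Z_N]$, where $(\sum a_gg)^{(-1)}=\sum a_gg^{-1}$. *)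

theory Defs
  imports "HOL-Analysis.Analysis"
begin

definition field_trace :: "nat \<Rightarrow> nat \<Rightarrow> 'a::field \<Rightarrow> 'a" where
  "field_trace p f x = (\<Sum>i<f. x ^ (p ^ i))"

text \<open>Canonical additive character psi(x) = xi_p^{Tr(x)}, where Tr(x) lies in the
  prime field {of_nat k | k < p} and xi_p = exp(2 pi i / p).\<close>
definition canon_add_char :: "nat \<Rightarrow> nat \<Rightarrow> 'a::field \<Rightarrow> complex" where
  "canon_add_char p f x =
     cis (2 * pi * real (THE k. k < p \<and> of_nat k = field_trace p f x) / real p)"

definition primitive_elem :: "'a::{finite,field} \<Rightarrow> bool" where
  "primitive_elem g \<longleftrightarrow> g \<noteq> 0 \<and> (\<forall>x. x \<noteq> 0 \<longrightarrow> (\<exists>k::nat. x = g ^ k))"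

definition gauss_period :: "nat \<Rightarrow> nat \<Rightarrow> nat \<Rightarrow> 'a::{finite,field} \<Rightarrow> nat \<Rightarrow> complex" where
  "gauss_period p f N g a =
     (\<Sum>x\<in>{g ^ (a + N * k) | k. True}. canon_add_char p f x)"

text \<open>The first row (a_0,...,a_{N-1}) of the circulant matrix generated by I1 - I3
  (index sets of exponents a in {0..N-1}).\<close>
definition row_of :: "nat set \<Rightarrow> nat set \<Rightarrow> nat \<Rightarrow> int" where
  "row_of I1 I3 i = (if i \<in> I1 then 1 else if i \<in> I3 then -1 else 0)"

text \<open>I1 - I3 generates a CW(N,w): (I1-I3)(I1-I3)^(-1) = w * 1 in Z[Z_N], i.e. for
  every k mod N, the coefficient sum_{i - j = k mod N} a_i a_j equals w if k = 0 and 0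
  otherwise.\<close>
definition generates_CW :: "nat \<Rightarrow> real \<Rightarrow> nat set \<Rightarrow> nat set \<Rightarrow> bool" where
  "generates_CW N w I1 I3 \<longleftrightarrow>
     (\<forall>k<N. real_of_int (\<Sum>i<N. \<Sum>j<N. if (i + N - j) mod N = k
                 then row_of I1 I3 i * row_of I1 I3 j else 0)
            = (if k = 0 then w else 0))"

end

theory Submission
  imports Defs "HOL-Number_Theory.Cong" "Jordan_Normal_Form.Char_Poly"
begin

text \<open>Let c be the first row of the circulant generated by I1 - I3, so that
  \<eta>_a = \<alpha>2 - t c_a. Under the discrete Fourier transform on Z_N, I1 - I3 generates a
  CW(N, q/t^2) iff every Fourier coefficient of c has squared modulus q/t^2, and the Fourier
  coefficients of the periods are the Gauss sums G(\<chi>_j) of the multiplicative characters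
  of order dividing N. Since |G(\<chi>_j)|^2 = q for j \<noteq> 0 and G(\<chi>_0) = -1, only j = 0
  matters, and the condition becomes (N \<alpha>2 + 1)^2 = q. The root N \<alpha>2 + 1 = -\<surd>q is
  impossible: \<alpha>2 would be a rational algebraic integer, hence an integer, so N would divide
  \<surd>q + 1; but in this semiprimitive case the Gaussian periods take only two values.\<close>

section \<open>Roots of unity and the discrete Fourier transform\<close>

definition unit_root :: "nat \<Rightarrow> complex" where
  "unit_root n = cis (2 * pi / real n)"

lemma unit_root_power: "unit_root n ^ k = exp (2 * of_real pi * \<i> * of_nat k / of_nat n)"
proof -
  have "unit_root n ^ k = cis (real k * (2 * pi / real n))"
    unfolding unit_root_def by (rule Complex.DeMoivre)
  also have "\<dots> = exp (2 * of_real pi * \<i> * of_nat k / of_nat n)"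
    by (simp add: cis_conv_exp divide_inverse mult_ac)
  finally show ?thesis .
qed

lemma unit_root_power_eq_iff:
  "n \<ge> 1 \<Longrightarrow> unit_root n ^ a = unit_root n ^ b \<longleftrightarrow> a mod n = b mod n"
  unfolding unit_root_power by (rule complex_root_unity_eq)

lemma unit_root_power_eq_1_iff: "n \<ge> 1 \<Longrightarrow> unit_root n ^ a = 1 \<longleftrightarrow> n dvd a"
  unfolding unit_root_power by (rule complex_root_unity_eq_1)

lemma unit_root_power_mod: "n \<ge> 1 \<Longrightarrow> unit_root n ^ (a mod n) = unit_root n ^ a"
  by (simp add: unit_root_power_eq_iff)

lemma unit_root_power_mult_mod: "n \<ge> 1 \<Longrightarrow> unit_root n ^ (j * (a mod n)) = unit_root n ^ (j * a)"
  by (simp add: unit_root_power_eq_iff mod_mult_right_eq)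

lemma unit_root_nonzero [simp]: "unit_root n \<noteq> 0"
  by (simp add: unit_root_def)

lemma cnj_unit_root_power_mult: "cnj (unit_root n) ^ a * unit_root n ^ a = 1"
proof -
  have "cnj (unit_root n) * unit_root n = 1"
    by (simp only: unit_root_def cis_cnj cis_mult) simp
  thus ?thesis by (simp flip: power_mult_distrib)
qed

lemma unit_root_power_shift:
  assumes "N \<ge> 1" and "l \<le> N"
  shows "unit_root N ^ (j * ((i + N - l) mod N)) = unit_root N ^ (j * i) * cnj (unit_root N) ^ (j * l)"
proof -
  have "(j * ((i + N - l) mod N) + j * l) mod N = (j * i) mod N"
  proof -
    have "(j * ((i + N - l) mod N) + j * l) mod N = (j * (i + N - l) + j * l) mod N"
      by (metis mod_add_left_eq mod_mult_right_eq)
    also have "j * (i + N - l) + j * l = j * (i + N - l + l)"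
      by (simp only: add_mult_distrib2)
    also have "\<dots> = j * i + N * j"
      using assms(2) by (simp add: algebra_simps)
    finally show ?thesis by simp
  qed
  hence "unit_root N ^ (j * ((i + N - l) mod N)) * unit_root N ^ (j * l) = unit_root N ^ (j * i)"
    using assms(1) by (simp add: unit_root_power_eq_iff flip: power_add)
  hence "unit_root N ^ (j * ((i + N - l) mod N)) * (cnj (unit_root N) ^ (j * l) * unit_root N ^ (j * l))
         = unit_root N ^ (j * i) * cnj (unit_root N) ^ (j * l)"
    by (simp add: mult_ac)
  thus ?thesis by (simp only: cnj_unit_root_power_mult mult_1_right)
qed

lemma sum_unit_root_powers:
  assumes "n \<ge> 1" and "n dvd m"
  shows "(\<Sum>k<m. unit_root n ^ (j * k)) = (if n dvd j then of_nat m else 0)"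
proof (cases "n dvd j")
  case True
  hence "unit_root n ^ j = 1" using assms(1) by (simp add: unit_root_power_eq_1_iff)
  thus ?thesis using True by (simp add: power_mult)
next
  case False
  define z where "z = unit_root n ^ j"
  have "z \<noteq> 1" using False assms(1) by (simp add: z_def unit_root_power_eq_1_iff)
  moreover have "z ^ m = 1"
    using assms by (simp add: z_def unit_root_power_eq_1_iff flip: power_mult)
  ultimately have "(\<Sum>k<m. z ^ k) = 0" by (simp add: sum_gp_strict)
  thus ?thesis using False by (simp add: z_def power_mult)
qed

lemma unit_root_orthogonality:
  assumes "N \<ge> 1" and "k < N" and "k' < N"
  shows "(\<Sum>j<N. unit_root N ^ (j * k) * cnj (unit_root N) ^ (j * k')) = (if k = k' then of_nat N else 0)"
proof -
  define d where "d = (k + N - k') mod N"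
  have "(\<Sum>j<N. unit_root N ^ (j * k) * cnj (unit_root N) ^ (j * k')) = (\<Sum>j<N. unit_root N ^ (d * j))"
  proof (rule sum.cong[OF refl])
    fix j
    show "unit_root N ^ (j * k) * cnj (unit_root N) ^ (j * k') = unit_root N ^ (d * j)"
      using unit_root_power_shift[OF assms(1) less_imp_le[OF assms(3)], of j k]
      by (simp only: d_def mult.commute[of "(k + N - k') mod N" j])
  qed
  also have "\<dots> = (if N dvd d then of_nat N else 0)"
    using assms(1) by (rule sum_unit_root_powers) simp
  also have "N dvd d \<longleftrightarrow> k = k'"
    using assms(2,3) by (auto simp: d_def dvd_eq_mod_eq_0 mod_if split: if_splits)
  finally show ?thesis .
qed

definition dft :: "nat \<Rightarrow> (nat \<Rightarrow> complex) \<Rightarrow> nat \<Rightarrow> complex" where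
  "dft N x j = (\<Sum>i<N. x i * unit_root N ^ (j * i))"

lemma dft_inversion:
  assumes "N \<ge> 1" and "k < N"
  shows "(\<Sum>j<N. dft N x j * cnj (unit_root N) ^ (j * k)) = of_nat N * x k"
proof -
  have "(\<Sum>j<N. dft N x j * cnj (unit_root N) ^ (j * k))
      = (\<Sum>i<N. x i * (\<Sum>j<N. unit_root N ^ (j * i) * cnj (unit_root N) ^ (j * k)))"
    unfolding dft_def sum_distrib_right sum_distrib_left
    by (subst sum.swap) (simp add: mult_ac mult.commute[of i j for i j])
  also have "\<dots> = (\<Sum>i<N. if i = k then x i * of_nat N else 0)"
    using assms by (intro sum.cong refl) (simp add: unit_root_orthogonality)
  also have "\<dots> = of_nat N * x k"
    using assms(2) by (simp add: mult.commute)
  finally show ?thesis .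
qed

lemma dft_eq_const_iff:
  assumes "N \<ge> 1"
  shows "(\<forall>j<N. dft N x j = w) \<longleftrightarrow> (\<forall>k<N. x k = (if k = 0 then w else 0))"
proof
  assume dft_const: "\<forall>j<N. dft N x j = w"
  show "\<forall>k<N. x k = (if k = 0 then w else 0)"
  proof (intro allI impI)
    fix k assume k: "k < N"
    have "of_nat N * x k = w * (\<Sum>j<N. unit_root N ^ (j * 0) * cnj (unit_root N) ^ (j * k))"
      using dft_const by (simp add: dft_inversion[OF assms k, symmetric] sum_distrib_left)
    also have "\<dots> = w * (if 0 = k then of_nat N else 0)"
      using assms k by (subst unit_root_orthogonality) auto
    finally show "x k = (if k = 0 then w else 0)"
      using assms by (auto split: if_splits)
  qed
next
  assume delta: "\<forall>k<N. x k = (if k = 0 then w else 0)"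
  show "\<forall>j<N. dft N x j = w"
  proof (intro allI impI)
    fix j
    have "dft N x j = (\<Sum>i<N. if i = 0 then w else 0)"
      unfolding dft_def using delta by (intro sum.cong) auto
    thus "dft N x j = w" using assms by simp
  qed
qed

definition cyclic_autocorr :: "nat \<Rightarrow> (nat \<Rightarrow> int) \<Rightarrow> nat \<Rightarrow> int" where
  "cyclic_autocorr N c k = (\<Sum>i<N. \<Sum>l<N. if (i + N - l) mod N = k then c i * c l else 0)"

lemma dft_cyclic_autocorr:
  assumes "N \<ge> 1"
  shows "dft N (\<lambda>k. of_int (cyclic_autocorr N c k)) j
       = dft N (\<lambda>i. of_int (c i)) j * cnj (dft N (\<lambda>i. of_int (c i)) j)"
proof -
  have "dft N (\<lambda>k. of_int (cyclic_autocorr N c k)) j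
      = (\<Sum>k<N. \<Sum>i<N. \<Sum>l<N.
          if (i + N - l) mod N = k then of_int (c i * c l) * unit_root N ^ (j * k) else 0)"
    unfolding dft_def cyclic_autocorr_def of_int_sum sum_distrib_right by (intro sum.cong refl) simp
  also have "\<dots> = (\<Sum>i<N. \<Sum>k<N. \<Sum>l<N.
          if (i + N - l) mod N = k then of_int (c i * c l) * unit_root N ^ (j * k) else 0)"
    by (rule sum.swap)
  also have "\<dots> = (\<Sum>i<N. \<Sum>l<N. \<Sum>k<N.
          if (i + N - l) mod N = k then of_int (c i * c l) * unit_root N ^ (j * k) else 0)"
    by (rule sum.cong[OF refl], rule sum.swap)
  also have "\<dots> = (\<Sum>i<N. \<Sum>l<N. of_int (c i * c l) * unit_root N ^ (j * ((i + N - l) mod N)))"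
    using assms by (intro sum.cong refl) (simp add: sum.delta)
  also have "\<dots> = (\<Sum>i<N. \<Sum>l<N.
          (of_int (c i) * unit_root N ^ (j * i)) * (of_int (c l) * cnj (unit_root N) ^ (j * l)))"
    using assms by (intro sum.cong refl) (simp add: unit_root_power_shift mult_ac)
  also have "\<dots> = dft N (\<lambda>i. of_int (c i)) j * cnj (dft N (\<lambda>i. of_int (c i)) j)"
    by (simp add: dft_def sum_product cnj_sum)
  finally show ?thesis .
qed

lemma generates_CW_iff_dft:
  assumes "N \<ge> 1"
  shows "generates_CW N w I1 I3 \<longleftrightarrow>
    (\<forall>j<N. dft N (\<lambda>i. of_int (row_of I1 I3 i)) j * cnj (dft N (\<lambda>i. of_int (row_of I1 I3 i)) j)
       = of_real w)"
proof -
  have real_complex: "real_of_int a = r \<longleftrightarrow> complex_of_int a = complex_of_real r" for a r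
    by (metis of_real_eq_iff of_real_of_int_eq)
  have "generates_CW N w I1 I3 \<longleftrightarrow>
      (\<forall>k<N. of_int (cyclic_autocorr N (row_of I1 I3) k) = (if k = 0 then of_real w else (0::complex)))"
    unfolding generates_CW_def cyclic_autocorr_def[symmetric] real_complex by auto
  also have "\<dots> \<longleftrightarrow> (\<forall>j<N. dft N (\<lambda>k. of_int (cyclic_autocorr N (row_of I1 I3) k)) j = of_real w)"
    using dft_eq_const_iff[OF assms] by simp
  finally show ?thesis by (simp only: dft_cyclic_autocorr[OF assms])
qed

section \<open>Algebraic integers\<close>

lemma algebraic_int_eigenvalue_int_mat:
  fixes A :: "int mat" and x :: complex
  assumes A: "A \<in> carrier_mat n n" and x: "eigenvalue (map_mat of_int A) x"
  shows "algebraic_int x"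
proof -
  have "map_mat of_int A \<in> carrier_mat n n" using A by simp
  hence "poly (char_poly (map_mat of_int A)) x = 0"
    using eigenvalue_root_char_poly x by blast
  hence "poly (map_poly of_int (char_poly A)) x = 0"
    by (simp add: of_int_hom.char_poly_hom[OF A])
  moreover have "lead_coeff (char_poly A) = 1"
    using degree_monic_char_poly[OF A] by simp
  ultimately show ?thesis
    unfolding algebraic_int_altdef_ipoly by blast
qed

lemma algebraic_int_sum_unit_root_powers:
  fixes k :: "'b \<Rightarrow> nat"
  assumes n: "n \<ge> 1" and X: "finite X"
  shows "algebraic_int (\<Sum>x\<in>X. unit_root n ^ k x)"
proof -
  \<comment> \<open>The sum is an eigenvalue of an integer matrix, with eigenvector (\<zeta>^j)_j, \<zeta> = unit_root n.\<close>
  define \<eta> where "\<eta> = (\<Sum>x\<in>X. unit_root n ^ k x)"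
  define A :: "int mat" where "A = mat n n (\<lambda>(i, j). int (card {x\<in>X. (k x + i) mod n = j}))"
  define v :: "complex vec" where "v = vec n (\<lambda>j. unit_root n ^ j)"
  have A: "A \<in> carrier_mat n n" by (simp add: A_def)
  have "map_mat of_int A *\<^sub>v v = \<eta> \<cdot>\<^sub>v v"
  proof (rule eq_vecI)
    fix i assume "i < dim_vec (\<eta> \<cdot>\<^sub>v v)"
    hence i: "i < n" by (simp add: v_def)
    have "(map_mat of_int A *\<^sub>v v) $ i = (\<Sum>j<n. of_nat (card {x\<in>X. (k x + i) mod n = j}) * unit_root n ^ j)"
      using i by (simp add: A_def v_def scalar_prod_def row_def atLeast0LessThan)
    also have "\<dots> = (\<Sum>j<n. \<Sum>x\<in>{x\<in>X. (k x + i) mod n = j}. unit_root n ^ ((k x + i) mod n))"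
      by (intro sum.cong refl) simp
    also have "\<dots> = (\<Sum>x\<in>X. unit_root n ^ ((k x + i) mod n))"
      using n X by (intro sum.group) auto
    also have "\<dots> = \<eta> * v $ i"
      using n i by (simp add: \<eta>_def v_def sum_distrib_right unit_root_power_mod power_add)
    finally show "(map_mat of_int A *\<^sub>v v) $ i = (\<eta> \<cdot>\<^sub>v v) $ i"
      using i by (simp add: v_def)
  qed (simp add: v_def A_def)
  moreover have "v \<noteq> 0\<^sub>v n"
  proof
    assume "v = 0\<^sub>v n"
    hence "v $ 0 = 0\<^sub>v n $ 0" by simp
    thus False using n by (simp add: v_def)
  qed
  ultimately have "eigenvalue (map_mat of_int A) \<eta>"
    unfolding eigenvalue_def eigenvector_def
    by (intro exI[of _ v]) (simp add: A_def v_def)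
  thus ?thesis
    unfolding \<eta>_def by (rule algebraic_int_eigenvalue_int_mat[OF A])
qed

lemma rat_square_of_nat_is_int:
  fixes r :: rat
  assumes "r ^ 2 = of_nat q"
  shows "r \<in> \<int>"
proof -
  define x where "x = real_of_rat r"
  have x2: "x ^ 2 = real q"
    using assms unfolding x_def by (metis of_rat_of_nat_eq of_rat_power)
  have "algebraic_int x"
  proof (rule algebraic_int.intros[of "[:- real q, 0, 1:]"])
    show "\<forall>i. coeff [:- real q, 0, 1:] i \<in> \<int>"
      by (simp add: coeff_pCons split: nat.split)
    show "poly [:- real q, 0, 1:] x = 0"
      using x2 by (simp add: power2_eq_square algebra_simps)
  qed simp
  hence "x \<in> \<int>"
    by (rule rational_algebraic_int_is_int) (simp add: x_def)
  thus ?thesis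
    by (metis Ints_cases of_rat_eq_iff of_rat_of_int_eq x_def Ints_of_int)
qed

section \<open>Finite fields with a primitive element\<close>

lemma card_roots_linearized_poly_le:
  fixes c :: "nat \<Rightarrow> 'a::field"
  assumes "p > 1" and "r \<ge> 1" and "c (r - 1) \<noteq> 0"
  shows "card {x. (\<Sum>i<r. c i * x ^ (p ^ i)) = 0} \<le> p ^ (r - 1)"
proof -
  define P where "P = (\<Sum>i<r. monom (c i) (p ^ i))"
  have poly_P: "poly P x = (\<Sum>i<r. c i * x ^ (p ^ i))" for x
    by (simp add: P_def poly_sum poly_monom)
  have "coeff P (p ^ (r - 1)) = (\<Sum>i<r. if i = r - 1 then c i else 0)"
    unfolding P_def coeff_sum using assms(1) by (intro sum.cong) (auto simp: power_inject_exp)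
  hence "P \<noteq> 0" using assms(2,3) by auto
  have "degree P \<le> p ^ (r - 1)"
    unfolding P_def
  proof (rule degree_sum_le)
    fix i assume "i \<in> {..<r}"
    hence "p ^ i \<le> p ^ (r - 1)" using assms(1) by (intro power_increasing) auto
    thus "degree (monom (c i) (p ^ i)) \<le> p ^ (r - 1)" using degree_monom_le order_trans by blast
  qed simp
  thus ?thesis
    using card_poly_roots_bound[OF \<open>P \<noteq> 0\<close>] unfolding poly_P by simp
qed

lemma power_card_minus_one_eq_1:
  fixes x :: "'a::{finite,field}"
  assumes "x \<noteq> 0"
  shows "x ^ (CARD('a) - 1) = 1"
proof -
  let ?U = "UNIV - {0::'a}"
  have "bij_betw (\<lambda>y. x * y) ?U ?U"
    by (rule bij_betwI[of _ _ _ "\<lambda>y. y / x"]) (use assms in auto)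
  hence "(\<Prod>y\<in>?U. x * y) = (\<Prod>y\<in>?U. y)"
    by (rule prod.reindex_bij_betw)
  hence "x ^ card ?U * (\<Prod>y\<in>?U. y) = 1 * (\<Prod>y\<in>?U. y)"
    by (simp add: prod.distrib)
  moreover have "(\<Prod>y\<in>?U. y) \<noteq> 0" by simp
  ultimately have "x ^ card ?U = 1" by (rule mult_right_cancel[THEN iffD1, rotated])
  thus ?thesis by (simp add: card_Diff_singleton)
qed

locale finite_field_prim =
  fixes p f :: nat and g :: "'a::{finite,field}"
  assumes prime_p: "prime p" and char: "CHAR('a) = p" and card: "CARD('a) = p ^ f"
    and primitive: "primitive_elem g"
begin

lemma p_gt_1: "p > 1"
  using prime_p prime_gt_1_nat by blast

lemma card_ge_2: "CARD('a) \<ge> 2"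
  using card_mono[of UNIV "{0::'a, 1}"] by simp

lemma f_pos: "f \<ge> 1"
  using card_ge_2 card by (cases f) auto

lemma g_nonzero: "g \<noteq> 0"
  using primitive by (simp add: primitive_elem_def)

lemma frobenius_add: "(x + y :: 'a) ^ (p ^ i) = x ^ (p ^ i) + y ^ (p ^ i)"
  by (rule freshmans_dream') (auto simp: char prime_p)

lemma frobenius_sum: "(sum h A :: 'a) ^ (p ^ i) = (\<Sum>a\<in>A. h a ^ (p ^ i))"
  by (rule freshmans_dream_sum') (auto simp: char prime_p)

lemma frobenius_minus: "(- x :: 'a) ^ (p ^ i) = - (x ^ (p ^ i))"
proof -
  have "(x + - x) ^ (p ^ i) = x ^ (p ^ i) + (- x) ^ (p ^ i)" by (rule frobenius_add)
  moreover have "(0::'a) ^ (p ^ i) = 0" using p_gt_1 by simp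
  ultimately show ?thesis by (simp add: eq_neg_iff_add_eq_0 add.commute)
qed

lemma power_card: "x ^ CARD('a) = (x::'a)"
proof (cases "x = 0")
  case False
  have "CARD('a) = Suc (CARD('a) - 1)" using card_ge_2 by simp
  hence "x ^ CARD('a) = x ^ (CARD('a) - 1) * x" by (metis power_Suc2)
  thus ?thesis using power_card_minus_one_eq_1[OF False] by simp
qed (use card_ge_2 in simp)


lemma power_g_mod: "g ^ (k mod (CARD('a) - 1)) = g ^ k"
proof -
  have "g ^ k = (g ^ (CARD('a) - 1)) ^ (k div (CARD('a) - 1)) * g ^ (k mod (CARD('a) - 1))"
    by (simp only: power_mult [symmetric] power_add [symmetric] mult_div_mod_eq)
  also have "\<dots> = g ^ (k mod (CARD('a) - 1))"
    by (simp only: power_card_minus_one_eq_1[OF g_nonzero] power_one mult_1)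
  finally show ?thesis ..
qed

lemma bij_betw_power_g: "bij_betw (\<lambda>k. g ^ k) {..<CARD('a) - 1} (UNIV - {0})"
proof -
  have image: "(\<lambda>k. g ^ k) ` {..<CARD('a) - 1} = UNIV - {0}"
  proof (intro equalityI subsetI)
    fix x :: 'a assume "x \<in> UNIV - {0}"
    then obtain k :: nat where "x = g ^ k" using primitive by (auto simp: primitive_elem_def)
    hence "x = g ^ (k mod (CARD('a) - 1))" by (simp only: power_g_mod)
    moreover have "k mod (CARD('a) - 1) < CARD('a) - 1" using card_ge_2 by simp
    ultimately show "x \<in> (\<lambda>k. g ^ k) ` {..<CARD('a) - 1}" by blast
  qed (use g_nonzero in auto)
  moreover have "card (UNIV - {0::'a}) = CARD('a) - 1" by (simp add: card_Diff_singleton)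
  ultimately have "inj_on (\<lambda>k. g ^ k) {..<CARD('a) - 1}"
    by (intro eq_card_imp_inj_on) simp_all
  with image show ?thesis by (simp add: bij_betw_def)
qed

lemma power_g_eq_iff: "g ^ a = g ^ b \<longleftrightarrow> a mod (CARD('a) - 1) = b mod (CARD('a) - 1)"
proof -
  have "CARD('a) - 1 > 0" using card_ge_2 by simp
  hence "g ^ (a mod (CARD('a) - 1)) = g ^ (b mod (CARD('a) - 1)) \<longleftrightarrow> a mod (CARD('a) - 1) = b mod (CARD('a) - 1)"
    using bij_betw_power_g by (intro inj_on_eq_iff[of "\<lambda>k. g ^ k" "{..<CARD('a) - 1}"])
      (auto simp: bij_betw_def)
  thus ?thesis by (simp only: power_g_mod)
qed

definition dlog :: "'a \<Rightarrow> nat" where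
  "dlog = the_inv_into {..<CARD('a) - 1} (\<lambda>k. g ^ k)"

lemma power_dlog: "x \<noteq> 0 \<Longrightarrow> g ^ dlog x = x"
  unfolding dlog_def by (rule f_the_inv_into_f_bij_betw[OF bij_betw_power_g]) simp

lemma dlog_power: "dlog (g ^ k) = k mod (CARD('a) - 1)"
proof -
  have "dlog (g ^ k) = dlog (g ^ (k mod (CARD('a) - 1)))" by (simp only: power_g_mod)
  also have "\<dots> = k mod (CARD('a) - 1)"
    unfolding dlog_def using bij_betw_power_g card_ge_2
    by (intro the_inv_into_f_f) (auto simp: bij_betw_def)
  finally show ?thesis .
qed

lemma dlog_mult:
  assumes "x \<noteq> 0" and "y \<noteq> 0"
  shows "dlog (x * y) mod (CARD('a) - 1) = (dlog x + dlog y) mod (CARD('a) - 1)"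
proof -
  have "g ^ dlog (x * y) = g ^ (dlog x + dlog y)"
    using assms by (simp add: power_add power_dlog)
  thus ?thesis by (simp only: power_g_eq_iff)
qed


abbreviation Tr :: "'a \<Rightarrow> 'a" where "Tr \<equiv> field_trace p f"

abbreviation \<psi> :: "'a \<Rightarrow> complex" where "\<psi> \<equiv> canon_add_char p f"

lemma field_trace_add: "Tr (x + y) = Tr x + Tr y"
  by (simp add: field_trace_def frobenius_add sum.distrib)

lemma field_trace_power_p: "Tr x ^ p = Tr x"
proof -
  have "Tr x ^ p = Tr x ^ (p ^ 1)" by simp
  also have "\<dots> = (\<Sum>i<f. x ^ (p ^ Suc i))"
    unfolding field_trace_def frobenius_sum by (simp add: power_mult[symmetric] mult.commute)
  also have "\<dots> = Tr x"
  proof -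
    have "(\<Sum>i<Suc f. x ^ (p ^ i)) = x ^ (p ^ 0) + (\<Sum>i<f. x ^ (p ^ Suc i))"
      by (rule sum.lessThan_Suc_shift)
    moreover have "(\<Sum>i<Suc f. x ^ (p ^ i)) = Tr x + x ^ (p ^ f)"
      by (simp only: sum.lessThan_Suc field_trace_def)
    moreover have "x ^ (p ^ f) = x" using power_card card by simp
    ultimately show ?thesis by simp
  qed
  finally show ?thesis .
qed

lemma of_nat_power_p: "(of_nat k :: 'a) ^ p = of_nat k"
  using frobenius_sum[of "\<lambda>_. 1" "{..<k}" 1] by simp

lemma of_nat_eq_iff_mod_p: "(of_nat a :: 'a) = of_nat b \<longleftrightarrow> a mod p = b mod p"
  by (simp add: of_nat_eq_iff_cong_CHAR char cong_def)

lemma of_nat_mod_p: "(of_nat (a mod p) :: 'a) = of_nat a"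
  by (simp add: of_nat_eq_iff_mod_p)

lemma of_nat_eq_iff_below_p: "a < p \<Longrightarrow> b < p \<Longrightarrow> (of_nat a :: 'a) = of_nat b \<longleftrightarrow> a = b"
  by (simp add: of_nat_eq_iff_mod_p)

lemma prime_subfield: "(y::'a) ^ p = y \<Longrightarrow> \<exists>k<p. of_nat k = y"
proof -
  assume y: "y ^ p = y"
  define S where "S = {x::'a. x ^ p = x}"
  have "S = {x::'a. (\<Sum>i<2. (if i = 0 then -1 else 1) * x ^ (p ^ i)) = 0}"
    by (auto simp: S_def eval_nat_numeral)
  hence "card S \<le> p"
    using card_roots_linearized_poly_le[OF p_gt_1, of 2 "\<lambda>i. if i = 0 then -1 else 1"] by simp
  moreover have sub: "of_nat ` {..<p} \<subseteq> S"
    by (auto simp: S_def of_nat_power_p)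
  moreover have "card (of_nat ` {..<p} :: 'a set) = p"
    by (subst card_image) (auto intro!: inj_onI simp: of_nat_eq_iff_below_p)
  ultimately have "of_nat ` {..<p} = S"
    using card_mono[OF finite sub] by (intro card_subset_eq) auto
  moreover have "y \<in> S" using y by (simp add: S_def)
  ultimately show ?thesis by auto
qed

definition trace_rep :: "'a \<Rightarrow> nat" where
  "trace_rep x = (THE k. k < p \<and> of_nat k = Tr x)"

lemma trace_rep: "trace_rep x < p \<and> of_nat (trace_rep x) = Tr x"
proof -
  obtain k where "k < p" "of_nat k = Tr x"
    using prime_subfield[OF field_trace_power_p] by blast
  hence "\<exists>!k. k < p \<and> of_nat k = Tr x"
    by (metis of_nat_eq_iff_below_p)
  thus ?thesis unfolding trace_rep_def by (rule theI')
qed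

lemma trace_rep_unique: "k < p \<Longrightarrow> of_nat k = Tr x \<Longrightarrow> trace_rep x = k"
  using trace_rep[of x] by (metis of_nat_eq_iff_below_p)

lemma canon_add_char_eq: "\<psi> x = unit_root p ^ trace_rep x"
proof -
  have "unit_root p ^ trace_rep x = cis (real (trace_rep x) * (2 * pi / real p))"
    unfolding unit_root_def by (rule Complex.DeMoivre)
  thus ?thesis by (simp add: canon_add_char_def trace_rep_def mult_ac)
qed

lemma canon_add_char_add: "\<psi> (x + y) = \<psi> x * \<psi> y"
proof -
  have "trace_rep (x + y) = (trace_rep x + trace_rep y) mod p"
    using p_gt_1 trace_rep[of x] trace_rep[of y]
    by (intro trace_rep_unique) (auto simp: field_trace_add of_nat_mod_p)
  thus ?thesis using p_gt_1
    by (simp add: canon_add_char_eq unit_root_power_mod power_add)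
qed

lemma canon_add_char_eq_1_iff: "\<psi> x = 1 \<longleftrightarrow> Tr x = 0"
proof -
  have "\<psi> x = 1 \<longleftrightarrow> p dvd trace_rep x"
    using p_gt_1 by (simp add: canon_add_char_eq unit_root_power_eq_1_iff)
  also have "\<dots> \<longleftrightarrow> trace_rep x = 0"
    using trace_rep[of x] by (auto dest: nat_dvd_not_less)
  also have "\<dots> \<longleftrightarrow> Tr x = 0"
    using trace_rep[of x] trace_rep_unique[of 0 x] p_gt_1 by auto
  finally show ?thesis .
qed

lemma canon_add_char_0 [simp]: "\<psi> 0 = 1"
  using p_gt_1 by (simp add: canon_add_char_eq_1_iff field_trace_def power_0_left)

lemma cnj_canon_add_char: "cnj (\<psi> x) = \<psi> (- x)"
proof -
  have "cnj (\<psi> x) * \<psi> x = 1"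
    by (simp add: canon_add_char_eq cnj_unit_root_power_mult)
  moreover have "\<psi> (- x) * \<psi> x = 1"
    by (simp flip: canon_add_char_add)
  moreover have "\<psi> x \<noteq> 0"
    by (simp add: canon_add_char_eq)
  ultimately show ?thesis by (metis mult_cancel_right)
qed

lemma sum_canon_add_char_subgroup:
  assumes "0 \<in> S" and "\<And>a b. a \<in> S \<Longrightarrow> b \<in> S \<Longrightarrow> a + b \<in> S"
    and "\<And>a. a \<in> S \<Longrightarrow> - a \<in> S"
  shows "(\<Sum>z\<in>S. \<psi> (x * z)) = (if \<forall>z\<in>S. Tr (x * z) = 0 then of_nat (card S) else 0)"
proof (cases "\<forall>z\<in>S. Tr (x * z) = 0")
  case True
  hence "(\<Sum>z\<in>S. \<psi> (x * z)) = (\<Sum>z\<in>S. 1)"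
    by (intro sum.cong) (auto simp: canon_add_char_eq_1_iff)
  thus ?thesis using True by simp
next
  case False
  then obtain z0 where z0: "z0 \<in> S" "Tr (x * z0) \<noteq> 0" by auto
  have shift: "bij_betw (\<lambda>z. z + z0) S S"
  proof (rule bij_betwI[of _ _ _ "\<lambda>z. z - z0"])
    have "z - z0 \<in> S" if "z \<in> S" for z
      using assms(2)[OF that assms(3)[OF z0(1)]] by simp
    thus "(\<lambda>z. z - z0) \<in> S \<rightarrow> S" by blast
  qed (use assms z0 in auto)
  have "(\<Sum>z\<in>S. \<psi> (x * z)) = (\<Sum>z\<in>S. \<psi> (x * (z + z0)))"
    using sum.reindex_bij_betw[OF shift, of "\<lambda>z. \<psi> (x * z)"] by simp
  also have "\<dots> = (\<Sum>z\<in>S. \<psi> (x * z)) * \<psi> (x * z0)"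
    by (simp add: distrib_left canon_add_char_add sum_distrib_right)
  finally have "(\<Sum>z\<in>S. \<psi> (x * z)) * (1 - \<psi> (x * z0)) = 0"
    by (simp add: algebra_simps)
  moreover have "\<psi> (x * z0) \<noteq> 1"
    using z0 canon_add_char_eq_1_iff by simp
  ultimately have "(\<Sum>z\<in>S. \<psi> (x * z)) = 0" by simp
  thus ?thesis using False by (simp only: if_False)
qed

lemma field_trace_nonzero: "\<exists>x::'a. Tr x \<noteq> 0"
proof (rule ccontr)
  assume "\<not> ?thesis"
  hence "{x::'a. (\<Sum>i<f. 1 * x ^ (p ^ i)) = 0} = UNIV"
    by (auto simp: field_trace_def)
  moreover have "card {x::'a. (\<Sum>i<f. 1 * x ^ (p ^ i)) = 0} \<le> p ^ (f - 1)"
    using f_pos by (intro card_roots_linearized_poly_le p_gt_1) auto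
  moreover have "p ^ (f - 1) < p ^ f"
    using p_gt_1 f_pos by (intro power_strict_increasing) auto
  ultimately show False using card by simp
qed

lemma sum_canon_add_char_mult:
  "(\<Sum>y\<in>UNIV - {0}. \<psi> (c * y)) = (if c = 0 then of_nat (CARD('a) - 1) else -1)"
proof -
  have "(\<Sum>y\<in>UNIV. \<psi> (c * y)) = (if c = 0 then of_nat CARD('a) else 0)"
  proof (cases "c = 0")
    case False
    obtain x0 :: 'a where "Tr x0 \<noteq> 0" using field_trace_nonzero by blast
    hence "\<not> (\<forall>z\<in>UNIV. Tr (c * z) = 0)"
      using False by (metis UNIV_I nonzero_mult_div_cancel_left times_divide_eq_right)
    thus ?thesis using False by (subst sum_canon_add_char_subgroup) auto
  qed simp
  moreover have "(\<Sum>y\<in>UNIV - {0}. \<psi> (c * y)) = (\<Sum>y\<in>UNIV. \<psi> (c * y)) - 1"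
    using sum.remove[of UNIV 0 "\<lambda>y. \<psi> (c * y)"] by simp
  ultimately show ?thesis
    using card_ge_2 by (simp add: of_nat_diff)
qed

end

section \<open>Gauss sums and Gaussian periods\<close>

locale gauss_periods = finite_field_prim p f g for p f :: nat and g :: "'a::{finite,field}" +
  fixes N :: nat
  assumes N_pos: "N \<ge> 1" and N_dvd: "N dvd (CARD('a) - 1)"
begin

abbreviation \<eta> :: "nat \<Rightarrow> complex" where "\<eta> \<equiv> gauss_period p f N g"

definition cyclotomic_class :: "nat \<Rightarrow> 'a set" where
  "cyclotomic_class a = {x. x \<noteq> 0 \<and> dlog x mod N = a}"

lemma dlog_power_mod_N: "dlog (g ^ k) mod N = k mod N"
  by (simp only: dlog_power mod_mod_cancel[OF N_dvd])

lemma dlog_mult_mod_N: "x \<noteq> 0 \<Longrightarrow> y \<noteq> 0 \<Longrightarrow> dlog (x * y) mod N = (dlog x + dlog y) mod N"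
  using dlog_mult by (metis mod_mod_cancel[OF N_dvd])

lemma gauss_period_eq: "a < N \<Longrightarrow> \<eta> a = (\<Sum>x\<in>cyclotomic_class a. \<psi> x)"
proof -
  assume a: "a < N"
  have "{g ^ (a + N * k) | k. True} = cyclotomic_class a"
  proof (intro equalityI subsetI)
    fix x assume "x \<in> {g ^ (a + N * k) | k. True}"
    thus "x \<in> cyclotomic_class a"
      using a g_nonzero by (auto simp: cyclotomic_class_def dlog_power_mod_N)
  next
    fix x assume "x \<in> cyclotomic_class a"
    hence "x \<noteq> 0" "dlog x mod N = a" by (auto simp: cyclotomic_class_def)
    hence "x = g ^ (a + N * (dlog x div N))"
      by (metis power_dlog mod_mult_div_eq add.commute)
    thus "x \<in> {g ^ (a + N * k) | k. True}" by blast
  qed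
  thus ?thesis by (simp add: gauss_period_def)
qed

lemma cyclotomic_class_mult:
  "x \<in> cyclotomic_class b \<Longrightarrow> y \<noteq> 0 \<Longrightarrow> x * y \<in> cyclotomic_class ((b + dlog y) mod N)"
  by (auto simp: cyclotomic_class_def dlog_mult_mod_N mod_add_left_eq)

lemma card_cyclotomic_class: "a < N \<Longrightarrow> card (cyclotomic_class a) = card (cyclotomic_class 0)"
proof -
  assume a: "a < N"
  have ga: "g ^ a \<noteq> 0" using g_nonzero by simp
  have "bij_betw (\<lambda>x. x * g ^ a) (cyclotomic_class 0) (cyclotomic_class a)"
  proof (rule bij_betwI[of _ _ _ "\<lambda>x. x / g ^ a"])
    show "(\<lambda>x. x * g ^ a) \<in> cyclotomic_class 0 \<rightarrow> cyclotomic_class a"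
      using cyclotomic_class_mult[OF _ ga, of _ 0] a by (simp add: dlog_power_mod_N)
    show "(\<lambda>x. x / g ^ a) \<in> cyclotomic_class a \<rightarrow> cyclotomic_class 0"
    proof
      fix x assume x: "x \<in> cyclotomic_class a"
      hence x0: "x / g ^ a \<noteq> 0" using ga by (simp add: cyclotomic_class_def)
      have "(dlog (x / g ^ a) + a) mod N = dlog (x / g ^ a * g ^ a) mod N"
        by (metis dlog_mult_mod_N[OF x0 ga] dlog_power_mod_N mod_add_right_eq)
      also have "\<dots> = (0 + a) mod N"
        using x g_nonzero a by (simp add: cyclotomic_class_def)
      finally have "dlog (x / g ^ a) mod N = 0"
        by (simp only: cong_def[symmetric] cong_add_rcancel_nat) (simp add: cong_def)
      thus "x / g ^ a \<in> cyclotomic_class 0"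
        using x0 by (simp add: cyclotomic_class_def)
    qed
  qed (use ga in auto)
  thus ?thesis by (simp add: bij_betw_same_card)
qed

definition mult_char :: "nat \<Rightarrow> 'a \<Rightarrow> complex" where
  "mult_char j x = unit_root N ^ (j * dlog x)"

definition gauss_sum :: "nat \<Rightarrow> complex" where
  "gauss_sum j = (\<Sum>x\<in>UNIV - {0}. mult_char j x * \<psi> x)"

lemma mult_char_eq: "mult_char j x = unit_root N ^ (j * (dlog x mod N))"
  unfolding mult_char_def using N_pos by (rule unit_root_power_mult_mod[symmetric])

lemma mult_char_mult:
  assumes "x \<noteq> 0" and "y \<noteq> 0"
  shows "mult_char j (x * y) = mult_char j x * mult_char j y"
proof -
  have "mult_char j (x * y) = unit_root N ^ (j * ((dlog x + dlog y) mod N))"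
    by (simp only: mult_char_eq dlog_mult_mod_N[OF assms])
  also have "\<dots> = mult_char j x * mult_char j y"
    using N_pos by (simp add: unit_root_power_mult_mod mult_char_def distrib_left power_add)
  finally show ?thesis .
qed

lemma mult_char_1 [simp]: "mult_char j 1 = 1"
  using dlog_power[of 0] by (simp add: mult_char_def)

lemma cnj_mult_char_mult: "cnj (mult_char j x) * mult_char j x = 1"
  by (simp add: mult_char_def cnj_unit_root_power_mult)

lemma sum_mult_char: "(\<Sum>x\<in>UNIV - {0}. mult_char j x) = (if N dvd j then of_nat (CARD('a) - 1) else 0)"
proof -
  have "(\<Sum>x\<in>UNIV - {0}. mult_char j x) = (\<Sum>k<CARD('a) - 1. mult_char j (g ^ k))"
    using sum.reindex_bij_betw[OF bij_betw_power_g, of "mult_char j"] by simp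
  also have "\<dots> = (\<Sum>k<CARD('a) - 1. unit_root N ^ (j * k))"
    using N_pos by (intro sum.cong refl) (simp only: mult_char_eq dlog_power_mod_N unit_root_power_mult_mod)
  also have "\<dots> = (if N dvd j then of_nat (CARD('a) - 1) else 0)"
    by (rule sum_unit_root_powers[OF N_pos N_dvd])
  finally show ?thesis .
qed

lemma dft_gauss_period: "dft N \<eta> j = gauss_sum j"
proof -
  have "gauss_sum j = (\<Sum>a<N. \<Sum>x\<in>{x \<in> UNIV - {0}. dlog x mod N = a}. mult_char j x * \<psi> x)"
    unfolding gauss_sum_def using N_pos by (intro sum.group[symmetric]) auto
  also have "\<dots> = (\<Sum>a<N. \<eta> a * unit_root N ^ (j * a))"
  proof (rule sum.cong[OF refl])
    fix a assume "a \<in> {..<N}"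
    hence "\<eta> a * unit_root N ^ (j * a) = (\<Sum>x\<in>cyclotomic_class a. \<psi> x * unit_root N ^ (j * a))"
      by (simp add: gauss_period_eq sum_distrib_right)
    also have "\<dots> = (\<Sum>x\<in>cyclotomic_class a. mult_char j x * \<psi> x)"
      by (intro sum.cong refl) (simp add: cyclotomic_class_def mult_char_eq)
    finally have "\<eta> a * unit_root N ^ (j * a) = (\<Sum>x\<in>cyclotomic_class a. mult_char j x * \<psi> x)" .
    thus "(\<Sum>x\<in>{x \<in> UNIV - {0}. dlog x mod N = a}. mult_char j x * \<psi> x) = \<eta> a * unit_root N ^ (j * a)"
      by (simp add: cyclotomic_class_def)
  qed
  finally show ?thesis by (simp add: dft_def)
qed

lemma gauss_sum_0: "gauss_sum 0 = -1"
  using sum_canon_add_char_mult[of 1] by (simp add: gauss_sum_def mult_char_def)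

lemma gauss_sum_mult_cnj_term:
  assumes "y \<noteq> 0"
  shows "gauss_sum j * (cnj (mult_char j y) * \<psi> (- y))
       = (\<Sum>u\<in>UNIV - {0}. mult_char j u * \<psi> ((u - 1) * y))"
proof -
  have "bij_betw (\<lambda>u. u * y) (UNIV - {0}) (UNIV - {0})"
    by (rule bij_betwI[of _ _ _ "\<lambda>x. x / y"]) (use assms in auto)
  hence "gauss_sum j = (\<Sum>u\<in>UNIV - {0}. mult_char j (u * y) * \<psi> (u * y))"
    unfolding gauss_sum_def by (rule sum.reindex_bij_betw[symmetric])
  hence "gauss_sum j * (cnj (mult_char j y) * \<psi> (- y))
      = (\<Sum>u\<in>UNIV - {0}. mult_char j (u * y) * \<psi> (u * y) * (cnj (mult_char j y) * \<psi> (- y)))"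
    by (simp add: sum_distrib_right)
  also have "\<dots> = (\<Sum>u\<in>UNIV - {0}. mult_char j u * \<psi> ((u - 1) * y))"
  proof (rule sum.cong[OF refl])
    fix u :: 'a assume "u \<in> UNIV - {0}"
    hence "mult_char j (u * y) * \<psi> (u * y) * (cnj (mult_char j y) * \<psi> (- y))
        = mult_char j u * (cnj (mult_char j y) * mult_char j y) * (\<psi> (u * y) * \<psi> (- y))"
      using assms by (simp add: mult_char_mult mult_ac)
    also have "\<dots> = mult_char j u * \<psi> (u * y + - y)"
      by (simp only: cnj_mult_char_mult canon_add_char_add mult_1_right)
    also have "u * y + - y = (u - 1) * y"
      by (simp add: algebra_simps)
    finally show "mult_char j (u * y) * \<psi> (u * y) * (cnj (mult_char j y) * \<psi> (- y))
        = mult_char j u * \<psi> ((u - 1) * y)" .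
  qed
  finally show ?thesis .
qed

lemma gauss_sum_norm:
  assumes "\<not> N dvd j"
  shows "gauss_sum j * cnj (gauss_sum j) = of_nat CARD('a)"
proof -
  have "cnj (gauss_sum j) = (\<Sum>y\<in>UNIV - {0}. cnj (mult_char j y) * \<psi> (- y))"
    by (simp add: gauss_sum_def cnj_sum cnj_canon_add_char)
  hence "gauss_sum j * cnj (gauss_sum j)
      = (\<Sum>y\<in>UNIV - {0}. gauss_sum j * (cnj (mult_char j y) * \<psi> (- y)))"
    by (simp add: sum_distrib_left)
  also have "\<dots> = (\<Sum>y\<in>UNIV - {0}. \<Sum>u\<in>UNIV - {0}. mult_char j u * \<psi> ((u - 1) * y))"
    by (intro sum.cong refl) (simp add: gauss_sum_mult_cnj_term)
  also have "\<dots> = (\<Sum>u\<in>UNIV - {0}. mult_char j u * (\<Sum>y\<in>UNIV - {0}. \<psi> ((u - 1) * y)))"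
    by (subst sum.swap) (simp add: sum_distrib_left)
  also have "\<dots> = (\<Sum>u\<in>UNIV - {0}. (if u = 1 then of_nat CARD('a) else 0) - mult_char j u)"
  proof (rule sum.cong[OF refl])
    fix u :: 'a
    show "mult_char j u * (\<Sum>y\<in>UNIV - {0}. \<psi> ((u - 1) * y))
        = (if u = 1 then of_nat CARD('a) else 0) - mult_char j u"
      using card_ge_2 by (cases "u = 1") (simp_all add: sum_canon_add_char_mult of_nat_diff)
  qed
  also have "\<dots> = of_nat CARD('a)"
    using assms by (simp add: sum_subtractf sum_mult_char)
  finally show ?thesis .
qed

lemma algebraic_int_gauss_period: "a < N \<Longrightarrow> algebraic_int (\<eta> a)"
  using p_gt_1 by (simp add: gauss_period_eq canon_add_char_eq algebraic_int_sum_unit_root_powers)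

end

section \<open>The semiprimitive case\<close>

lemma sum_lessThan_add: "(\<Sum>i<a + b. h i) = (\<Sum>i<a. h i) + (\<Sum>i<b. h (a + i :: nat))"
  by (induction b) (simp_all add: add_ac)

locale semiprimitive = gauss_periods p f g N for p f :: nat and g :: "'a::{finite,field}" and N :: nat +
  fixes e :: nat
  assumes f_eq: "f = 2 * e" and N_dvd_semiprimitive: "N dvd p ^ e + 1"
begin

abbreviation m :: nat where "m \<equiv> p ^ e"

lemma m_ge_2: "m \<ge> 2"
proof -
  have "e \<ge> 1" using f_pos f_eq by simp
  hence "p ^ 1 \<le> p ^ e" using p_gt_1 by (intro power_increasing) auto
  thus ?thesis using prime_ge_2_nat[OF prime_p] by simp
qed

lemma card_minus_1_eq: "CARD('a) - 1 = (m - 1) * (m + 1)"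
proof -
  have "CARD('a) = m * m" using card f_eq by (simp add: power_mult power2_eq_square mult.commute)
  moreover have "m * m - 1 = (m - 1) * (m + 1)" using m_ge_2 by (cases m) (simp_all add: algebra_simps)
  ultimately show ?thesis by simp
qed

definition subfield :: "'a set" where
  "subfield = {z. z ^ m = z}"

lemma zero_mem_subfield: "0 \<in> subfield"
  using p_gt_1 by (simp add: subfield_def)

lemma mem_subfield_iff: "z \<in> subfield \<longleftrightarrow> z = 0 \<or> z ^ (m - 1) = 1"
proof -
  have "z ^ m = z ^ (m - 1) * z"
    using m_ge_2 by (metis Suc_diff_1 less_le_trans pos2 power_Suc2)
  thus ?thesis by (auto simp: subfield_def)
qed

lemma card_subfield_ge: "card subfield \<ge> m"
proof -
  \<comment> \<open>The elements h t, t < m - 1, are distinct (m - 1)-th roots of unity.\<close>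
  define h where "h t = g ^ ((m + 1) * t)" for t
  have "h ` {..<m - 1} \<subseteq> subfield"
  proof
    fix z assume "z \<in> h ` {..<m - 1}"
    then obtain t where z: "z = h t" by blast
    have "(m + 1) * t * (m - 1) = (CARD('a) - 1) * t"
      by (simp only: card_minus_1_eq mult_ac)
    hence "z ^ (m - 1) = (g ^ (CARD('a) - 1)) ^ t"
      by (simp only: z h_def power_mult [symmetric])
    hence "z ^ (m - 1) = 1"
      by (simp only: power_card_minus_one_eq_1[OF g_nonzero] power_one)
    thus "z \<in> subfield" by (simp add: mem_subfield_iff)
  qed
  moreover have "0 \<notin> h ` {..<m - 1}" using g_nonzero by (auto simp: h_def)
  moreover have "inj_on h {..<m - 1}"
  proof (rule inj_onI)
    fix s t assume "s \<in> {..<m - 1}" "t \<in> {..<m - 1}" and hst: "h s = h t"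
    hence s: "s < m - 1" and t: "t < m - 1" by simp_all
    have bound: "(m + 1) * k < CARD('a) - 1" if "k < m - 1" for k
      unfolding card_minus_1_eq mult.commute[of "m - 1"] using that
      by (simp only: mult_less_cancel1) simp
    have "(m + 1) * s mod (CARD('a) - 1) = (m + 1) * t mod (CARD('a) - 1)"
      using hst by (simp only: h_def power_g_eq_iff)
    hence "(m + 1) * s = (m + 1) * t"
      by (simp only: mod_less[OF bound[OF s]] mod_less[OF bound[OF t]])
    thus "s = t" by (simp only: mult_cancel1) simp
  qed
  ultimately have "card (insert 0 (h ` {..<m - 1})) \<le> card subfield"
    using zero_mem_subfield by (intro card_mono) auto
  thus ?thesis
    using m_ge_2 \<open>0 \<notin> h ` {..<m - 1}\<close> \<open>inj_on h {..<m - 1}\<close> by (simp add: card_image)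
qed

lemma field_trace_mult_subfield:
  assumes "z \<in> subfield"
  shows "Tr (x * z) = (\<Sum>i<e. ((x + x ^ m) * z) ^ (p ^ i))"
proof -
  have "Tr (x * z) = (\<Sum>i<e. (x * z) ^ (p ^ i)) + (\<Sum>i<e. (x * z) ^ (p ^ (e + i)))"
    unfolding field_trace_def f_eq mult_2 by (rule sum_lessThan_add)
  also have "(\<Sum>i<e. (x * z) ^ (p ^ (e + i))) = (\<Sum>i<e. (x ^ m * z) ^ (p ^ i))"
  proof (intro sum.cong refl)
    fix i
    have "(x * z) ^ m = x ^ m * z" using assms by (simp add: subfield_def power_mult_distrib)
    thus "(x * z) ^ (p ^ (e + i)) = (x ^ m * z) ^ (p ^ i)"
      by (simp add: power_add power_mult)
  qed
  finally show ?thesis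
    by (simp add: distrib_right frobenius_add sum.distrib)
qed

lemma sum_canon_add_char_subfield:
  "(\<Sum>z\<in>subfield. \<psi> (x * z)) = (if x + x ^ m = 0 then of_nat (card subfield) else 0)"
proof -
  have "(\<forall>z\<in>subfield. Tr (x * z) = 0) \<longleftrightarrow> x + x ^ m = 0"
  proof
    assume trace_zero: "\<forall>z\<in>subfield. Tr (x * z) = 0"
    show "x + x ^ m = 0"
    proof (rule ccontr)
      assume nz: "x + x ^ m \<noteq> 0"
      define c where "c i = (x + x ^ m) ^ (p ^ i)" for i
      have "subfield \<subseteq> {z. (\<Sum>i<e. c i * z ^ (p ^ i)) = 0}"
        using trace_zero field_trace_mult_subfield by (auto simp: c_def power_mult_distrib)
      hence "card subfield \<le> card {z. (\<Sum>i<e. c i * z ^ (p ^ i)) = 0}"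
        by (intro card_mono) auto
      also have "\<dots> \<le> p ^ (e - 1)"
        using f_pos f_eq nz by (intro card_roots_linearized_poly_le p_gt_1) (auto simp: c_def)
      also have "\<dots> < m"
        using p_gt_1 f_pos f_eq by (intro power_strict_increasing) auto
      finally show False using card_subfield_ge by simp
    qed
  next
    assume "x + x ^ m = 0"
    thus "\<forall>z\<in>subfield. Tr (x * z) = 0"
      using p_gt_1 by (simp add: field_trace_mult_subfield power_0_left)
  qed
  moreover have "\<And>a b. a \<in> subfield \<Longrightarrow> b \<in> subfield \<Longrightarrow> a + b \<in> subfield"
    "\<And>a. a \<in> subfield \<Longrightarrow> - a \<in> subfield"
    using p_gt_1 by (auto simp: subfield_def frobenius_add frobenius_minus)
  ultimately show ?thesis
    using zero_mem_subfield by (subst sum_canon_add_char_subgroup) auto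
qed

lemma dlog_subfield_mod_N: "z \<in> subfield \<Longrightarrow> z \<noteq> 0 \<Longrightarrow> dlog z mod N = 0"
proof -
  assume z: "z \<in> subfield" "z \<noteq> 0"
  have "z ^ (m - 1) = 1"
    using z by (simp add: mem_subfield_iff)
  hence "g ^ (dlog z * (m - 1)) = g ^ 0"
    by (simp add: power_mult power_dlog[OF z(2)])
  hence "(dlog z * (m - 1)) mod (CARD('a) - 1) = 0"
    by (simp only: power_g_eq_iff mod_0)
  hence "(m - 1) * (m + 1) dvd (m - 1) * dlog z"
    by (simp only: mod_eq_0_iff_dvd card_minus_1_eq mult.commute[of "dlog z"])
  hence "m + 1 dvd dlog z"
    using m_ge_2 nat_mult_dvd_cancel1[of "m - 1" "m + 1" "dlog z"] by simp
  with N_dvd_semiprimitive have "N dvd dlog z"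
    by (rule dvd_trans)
  thus ?thesis by simp
qed

lemma cyclotomic_class_mult_subfield:
  assumes "x \<in> cyclotomic_class a" and "z \<in> subfield" and "z \<noteq> 0"
  shows "x * z \<in> cyclotomic_class a"
proof -
  have "x * z \<in> cyclotomic_class ((a + dlog z mod N) mod N)"
    using cyclotomic_class_mult[OF assms(1,3)] by (simp only: mod_add_right_eq)
  moreover have "a < N"
    using assms(1) N_pos by (auto simp: cyclotomic_class_def intro!: mod_less_divisor)
  ultimately show ?thesis
    using dlog_subfield_mod_N[OF assms(2,3)] by simp
qed

lemma gauss_period_semiprimitive:
  assumes "a < N"
  shows "of_nat (card subfield - 1) * \<eta> a
       = of_nat (card subfield) * of_nat (card {x\<in>cyclotomic_class a. x + x ^ m = 0})
         - of_nat (card (cyclotomic_class a))"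
proof -
  \<comment> \<open>Multiplication by an element of ?F preserves ?C since N divides m + 1; average over ?F.\<close>
  let ?C = "cyclotomic_class a" and ?F = "subfield - {0}"
  have "of_nat (card subfield - 1) * \<eta> a = (\<Sum>z\<in>?F. \<Sum>x\<in>?C. \<psi> x)"
    using assms zero_mem_subfield by (simp add: gauss_period_eq card_Diff_singleton)
  also have "\<dots> = (\<Sum>z\<in>?F. \<Sum>x\<in>?C. \<psi> (x * z))"
  proof (rule sum.cong[OF refl])
    fix z assume z: "z \<in> ?F"
    have "inverse z \<in> ?F" using z by (auto simp: subfield_def power_inverse)
    hence "bij_betw (\<lambda>x. x * z) ?C ?C"
      using z by (intro bij_betwI[of _ _ _ "\<lambda>x. x * inverse z"])
        (auto intro: cyclotomic_class_mult_subfield)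
    thus "(\<Sum>x\<in>?C. \<psi> x) = (\<Sum>x\<in>?C. \<psi> (x * z))"
      using sum.reindex_bij_betw[of _ ?C ?C \<psi>] by simp
  qed
  also have "\<dots> = (\<Sum>x\<in>?C. \<Sum>z\<in>?F. \<psi> (x * z))"
    by (rule sum.swap)
  also have "\<dots> = (\<Sum>x\<in>?C. (if x + x ^ m = 0 then of_nat (card subfield) else 0) - 1)"
  proof (rule sum.cong[OF refl])
    fix x
    show "(\<Sum>z\<in>?F. \<psi> (x * z)) = (if x + x ^ m = 0 then of_nat (card subfield) else 0) - 1"
      using sum.remove[OF _ zero_mem_subfield, of "\<lambda>z. \<psi> (x * z)"]
      by (simp add: sum_canon_add_char_subfield)
  qed
  also have "\<dots> = of_nat (card subfield) * of_nat (card {x\<in>?C. x + x ^ m = 0}) - of_nat (card ?C)"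
    by (simp add: sum_subtractf sum.If_cases Int_def conj_commute)
  finally show ?thesis .
qed

lemma gauss_period_two_valued: "\<exists>A B. \<forall>a<N. \<eta> a \<in> {A, B}"
proof -
  \<comment> \<open>Z is a coset of the multiplicative group of the subfield, so it meets at most one class.\<close>
  define Z where "Z = {x::'a. x \<noteq> 0 \<and> x + x ^ m = 0}"
  define K where "K = card subfield"
  have "{x\<in>cyclotomic_class a. x + x ^ m = 0} \<in> {{}, Z}" for a
  proof (cases "{x\<in>cyclotomic_class a. x + x ^ m = 0} = {}")
    case False
    then obtain y where y: "y \<in> cyclotomic_class a" "y + y ^ m = 0" by auto
    have "x \<in> cyclotomic_class a" if x: "x \<noteq> 0" "x + x ^ m = 0" for x
    proof -
      have "x ^ m = - x" "y ^ m = - y"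
        using x(2) y(2) by (simp_all add: eq_neg_iff_add_eq_0 add.commute)
      hence "(x / y) ^ m = x / y"
        by (simp add: power_divide)
      hence "x / y * y \<in> cyclotomic_class a"
        using y x cyclotomic_class_mult[of y a "x / y"] dlog_subfield_mod_N[of "x / y"]
        by (auto simp: subfield_def cyclotomic_class_def mult.commute)
      thus ?thesis using y by (simp add: cyclotomic_class_def)
    qed
    hence "{x\<in>cyclotomic_class a. x + x ^ m = 0} = Z"
      by (auto simp: Z_def cyclotomic_class_def)
    thus ?thesis by simp
  qed simp
  moreover have "(of_nat (K - 1) :: complex) \<noteq> 0"
    using card_subfield_ge m_ge_2 by (simp add: K_def)
  ultimately have "\<eta> a \<in> {(of_nat K * of_nat (card Z) - of_nat (card (cyclotomic_class 0))) / of_nat (K - 1),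
                             - of_nat (card (cyclotomic_class 0)) / of_nat (K - 1)}" if "a < N" for a
    using gauss_period_semiprimitive[OF that] card_cyclotomic_class[OF that]
    by (auto simp: K_def field_simps)
  thus ?thesis by blast
qed

end

section \<open>Gaussian periods in arithmetic progression\<close>

lemma of_real_of_rat: "of_real (of_rat r) = (of_rat r :: 'a::real_field)"
  by (cases r) (simp add: of_rat_rat)

lemma three_valued_eq_row_of:
  fixes h :: "nat \<Rightarrow> 'a::field_char_0"
  assumes period_values: "h ` {..<N} \<subseteq> {\<alpha> - t, \<alpha>, \<alpha> + t}" and "t \<noteq> 0"
  shows "\<forall>a<N. h a
    = \<alpha> - t * of_int (row_of {a \<in> {0..<N}. h a = \<alpha> - t} {a \<in> {0..<N}. h a = \<alpha> + t} a)"
proof (intro allI impI)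
  fix a assume a: "a < N"
  hence "h a \<in> {\<alpha> - t, \<alpha>, \<alpha> + t}" using period_values by auto
  thus "h a = \<alpha> - t * of_int (row_of {a \<in> {0..<N}. h a = \<alpha> - t} {a \<in> {0..<N}. h a = \<alpha> + t} a)"
    using a \<open>t \<noteq> 0\<close> by (auto simp: row_of_def)
qed

context gauss_periods
begin

lemma gauss_sum_eq_periods_dft:
  assumes "\<forall>a<N. \<eta> a = \<alpha> - t * c a"
  shows "gauss_sum j = \<alpha> * (\<Sum>i<N. unit_root N ^ (j * i)) - t * dft N c j"
proof -
  have "gauss_sum j = (\<Sum>i<N. (\<alpha> - t * c i) * unit_root N ^ (j * i))"
    unfolding dft_gauss_period[symmetric] dft_def using assms by (intro sum.cong refl) auto
  thus ?thesis
    by (simp add: dft_def algebra_simps sum_subtractf sum_distrib_left)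
qed

lemma generates_CW_iff_square:
  fixes \<alpha> t :: real
  assumes periods: "\<forall>a<N. \<eta> a = of_real \<alpha> - of_real t * of_int (row_of I1 I3 a)" and "t \<noteq> 0"
  shows "generates_CW N (real CARD('a) / t\<^sup>2) I1 I3 \<longleftrightarrow> (real N * \<alpha> + 1)\<^sup>2 = real CARD('a)"
proof -
  define c where "c = dft N (\<lambda>i. of_int (row_of I1 I3 i))"
  define w where "w = real CARD('a) / t\<^sup>2"
  note gauss_sum_eq = gauss_sum_eq_periods_dft[OF periods, folded c_def]
  have nonzero_freq: "c j * cnj (c j) = of_real w" if "0 < j" "j < N" for j
  proof -
    have "\<not> N dvd j" using that by (auto dest: dvd_imp_le)
    hence "(\<Sum>i<N. unit_root N ^ (j * i)) = 0"
      using sum_unit_root_powers[OF N_pos dvd_refl, of j] by simp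
    hence "c j = - gauss_sum j / of_real t"
      using gauss_sum_eq[of j] \<open>t \<noteq> 0\<close> by (simp add: field_simps)
    thus ?thesis
      using gauss_sum_norm[OF \<open>\<not> N dvd j\<close>] by (simp add: w_def power2_eq_square field_simps)
  qed
  have "c 0 = of_real ((real N * \<alpha> + 1) / t)"
    using gauss_sum_eq[of 0] \<open>t \<noteq> 0\<close> by (simp add: gauss_sum_0 field_simps)
  hence zero_freq: "c 0 * cnj (c 0) = of_real (((real N * \<alpha> + 1) / t)\<^sup>2)"
    by (simp only: complex_cnj_complex_of_real of_real_mult power2_eq_square)
  have "generates_CW N w I1 I3 \<longleftrightarrow> (\<forall>j<N. c j * cnj (c j) = of_real w)"
    unfolding generates_CW_iff_dft[OF N_pos] c_def ..
  also have "\<dots> \<longleftrightarrow> c 0 * cnj (c 0) = of_real w"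
  proof
    assume "\<forall>j<N. c j * cnj (c j) = of_real w"
    thus "c 0 * cnj (c 0) = of_real w" using N_pos by simp
  next
    assume zero: "c 0 * cnj (c 0) = of_real w"
    show "\<forall>j<N. c j * cnj (c j) = of_real w"
    proof (intro allI impI)
      fix j assume "j < N"
      thus "c j * cnj (c j) = of_real w" using zero nonzero_freq by (cases "j = 0") simp_all
    qed
  qed
  also have "\<dots> \<longleftrightarrow> (real N * \<alpha> + 1)\<^sup>2 = real CARD('a)"
    using \<open>t \<noteq> 0\<close> by (simp only: zero_freq of_real_eq_iff w_def power_divide divide_cancel_right
        power_eq_0_iff) simp
  finally show ?thesis by (simp only: w_def)
qed

lemma rat_gauss_period_is_int: "a < N \<Longrightarrow> \<eta> a = of_rat r \<Longrightarrow> r \<in> \<int>"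
  using rational_algebraic_int_is_int[OF algebraic_int_gauss_period]
  by (metis Ints_cases Rats_of_rat of_rat_eq_iff of_rat_of_int_eq Ints_of_int)

lemma card_gauss_period_values_le_2:
  assumes "CARD('a) = m\<^sup>2" and "N dvd m + 1"
  shows "card (\<eta> ` {..<N}) \<le> 2"
proof -
  have "m dvd p ^ f" using assms(1) card by (simp add: power2_eq_square)
  then obtain e where e: "m = p ^ e" using divides_primepow_nat[OF prime_p] by blast
  hence "p ^ f = p ^ (2 * e)" using assms(1) card by (simp add: power_mult mult.commute)
  hence "f = 2 * e" using p_gt_1 by (simp add: power_inject_exp)
  then interpret semiprimitive p f g N e
    using assms(2) e by unfold_locales auto
  obtain A B where "\<forall>a<N. \<eta> a \<in> {A, B}" using gauss_period_two_valued by blast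
  hence "\<eta> ` {..<N} \<subseteq> {A, B}" by auto
  hence "card (\<eta> ` {..<N}) \<le> card {A, B}" by (intro card_mono) auto
  also have "\<dots> \<le> 2" by (simp add: card_insert_le_m1)
  finally show ?thesis .
qed

lemma period_square_root_nonneg:
  fixes \<alpha> :: rat and r :: int
  assumes r: "of_nat N * \<alpha> + 1 = of_int r" and r_sq: "r\<^sup>2 = int CARD('a)"
    and "of_rat \<alpha> \<in> \<eta> ` {..<N}" and "card (\<eta> ` {..<N}) \<ge> 3"
  shows "r \<ge> 0"
proof (rule ccontr)
  assume "\<not> r \<ge> 0"
  define m where "m = nat (- r)"
  have m: "int m = - r" using \<open>\<not> r \<ge> 0\<close> by (simp add: m_def)
  have "CARD('a) = m\<^sup>2"
    using r_sq m by (metis of_nat_eq_iff of_nat_power power2_minus)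
  moreover have "N dvd m + 1"
  proof -
    obtain a where "a < N" "\<eta> a = of_rat \<alpha>" using assms(3) by auto
    hence "\<alpha> \<in> \<int>" by (rule rat_gauss_period_is_int)
    then obtain z :: int where z: "\<alpha> = of_int z" by (rule Ints_cases)
    have "of_int (int N * z + 1) = (of_int r :: rat)" using r z by simp
    hence "int N * z + 1 = r" by (simp only: of_int_eq_iff)
    hence "int (m + 1) = int N * (- z)" using m by simp
    thus ?thesis by (metis dvd_triv_left int_dvd_int_iff)
  qed
  ultimately have "card (\<eta> ` {..<N}) \<le> 2"
    by (rule card_gauss_period_values_le_2)
  thus False using assms(4) by simp
qed

lemma square_eq_card_iff:
  fixes \<alpha> :: rat
  assumes "of_rat \<alpha> \<in> \<eta> ` {..<N}" and "card (\<eta> ` {..<N}) \<ge> 3"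
  shows "(real N * of_rat \<alpha> + 1)\<^sup>2 = real CARD('a)
    \<longleftrightarrow> (\<exists>m::nat. CARD('a) = m\<^sup>2 \<and> of_rat \<alpha> = (real m - 1) / real N)"
proof
  assume sq: "(real N * of_rat \<alpha> + 1)\<^sup>2 = real CARD('a)"
  have "of_rat ((of_nat N * \<alpha> + 1)\<^sup>2) = (of_rat (of_nat CARD('a)) :: real)"
    using sq by (simp add: of_rat_add of_rat_mult of_rat_power)
  hence "(of_nat N * \<alpha> + 1)\<^sup>2 = of_nat CARD('a)"
    by (simp only: of_rat_eq_iff)
  hence "of_nat N * \<alpha> + 1 \<in> \<int>"
    by (rule rat_square_of_nat_is_int)
  then obtain r :: int where r: "of_nat N * \<alpha> + 1 = of_int r"
    by (rule Ints_cases)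
  hence r_real: "real N * of_rat \<alpha> + 1 = of_int r"
    by (metis of_rat_of_int_eq of_rat_add of_rat_mult of_rat_of_nat_eq of_rat_1)
  have r_sq: "r\<^sup>2 = int CARD('a)"
    using sq unfolding r_real by (metis of_int_eq_iff of_int_of_nat_eq of_int_power of_real_of_int_eq)
  \<comment> \<open>The root r = -\<surd>q is excluded by the semiprimitive case.\<close>
  have "r \<ge> 0"
    using r r_sq assms by (rule period_square_root_nonneg)
  then obtain m :: nat where "r = int m" using zero_le_imp_eq_int by blast
  hence "real N * of_rat \<alpha> + 1 = real m" using r_real by simp
  thus "\<exists>m::nat. CARD('a) = m\<^sup>2 \<and> of_rat \<alpha> = (real m - 1) / real N"
    using sq N_pos by (intro exI[of _ m]) (auto simp: field_simps simp flip: of_nat_power)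
next
  assume "\<exists>m::nat. CARD('a) = m\<^sup>2 \<and> of_rat \<alpha> = (real m - 1) / real N"
  then obtain m :: nat where "CARD('a) = m\<^sup>2" "of_rat \<alpha> = (real m - 1) / real N" by blast
  thus "(real N * of_rat \<alpha> + 1)\<^sup>2 = real CARD('a)"
    using N_pos by simp
qed

end

theorem proposition2p6:
  fixes g :: "'a::{finite,field}" and p f N :: nat
    and \<alpha>1 \<alpha>2 \<alpha>3 t :: rat
  assumes "prime p" and "CHAR('a) = p" and "CARD('a) = p ^ f"
    and "N > 2" and "N dvd (CARD('a) - 1)"
    and "primitive_elem g"
    and "gauss_period p f N g ` {0..<N} = {of_rat \<alpha>1, of_rat \<alpha>2, of_rat \<alpha>3}"
    and "t > 0" and "\<alpha>1 - \<alpha>2 = - t" and "\<alpha>3 - \<alpha>2 = t"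
  shows "generates_CW N (real (CARD('a)) / (of_rat t)^2)
           {a \<in> {0..<N}. gauss_period p f N g a = of_rat \<alpha>1}
           {a \<in> {0..<N}. gauss_period p f N g a = of_rat \<alpha>3}
         \<longleftrightarrow> (\<exists>m::nat. CARD('a) = m ^ 2 \<and> real_of_rat \<alpha>2 = (real m - 1) / real N)"
  (is "generates_CW N ?w ?I1 ?I3 \<longleftrightarrow> _")
proof -
  interpret gauss_periods p f g N
    using assms by unfold_locales auto
  have \<alpha>1: "\<alpha>1 = \<alpha>2 - t" and \<alpha>3: "\<alpha>3 = \<alpha>2 + t"
    using assms(9,10) by (simp_all add: algebra_simps)
  have period_values: "\<eta> ` {..<N} = {of_rat \<alpha>2 - of_rat t, of_rat \<alpha>2, of_rat \<alpha>2 + of_rat t}"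
    using assms(7) by (simp add: \<alpha>1 \<alpha>3 of_rat_add of_rat_diff atLeast0LessThan)
  have "\<forall>a<N. \<eta> a = of_real (of_rat \<alpha>2) - of_real (of_rat t) * of_int (row_of ?I1 ?I3 a)"
    using three_valued_eq_row_of[of \<eta> N "of_rat \<alpha>2" "of_rat t"] period_values assms(8)
    by (simp add: of_real_of_rat \<alpha>1 \<alpha>3 of_rat_add of_rat_diff)
  hence "generates_CW N ?w ?I1 ?I3 \<longleftrightarrow> (real N * of_rat \<alpha>2 + 1)\<^sup>2 = real CARD('a)"
    using assms(8) by (intro generates_CW_iff_square) simp_all
  also have "\<dots> \<longleftrightarrow> (\<exists>m::nat. CARD('a) = m ^ 2 \<and> real_of_rat \<alpha>2 = (real m - 1) / real N)"
    using period_values assms(8) by (intro square_eq_card_iff) (simp_all add: card_insert_if)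
  finally show ?thesis .
qed

end
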